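(* Let $\mathfrak{g}$ be a finite-dimensional complex Lie algebra admitting an inner CPA-structure $x\cdot y=[\phi(x),y]$ with $\phi$ a Lie algebra endomorphism of $\mathfrak{g}$. Then $\mathfrak{g}$ decomposes as a direct sum $\mathfrak{g}=\mathfrak{n}\oplus\mathfrak{h}$ of $\phi$-invariant ideals (ideals both of the Lie algebra and of the algebra $(\mathfrak{g},\cdot)$) such that: (1) $\phi|_{\mathfrak{n}}$ is a nilpotent endomorphism of $\mathfrak{n}$ and the induced CPA-structure on $\mathfrak{n}$ is nil-inner; (2) $\phi|_{\mathfrak{h}}$ is an automorphism of $\mathfrak{h}$, and $[[\mathfrak{h},\mathfrak{h}],[\mathfrak{h},\mathfrak{h}]]=0$.
   Context: A CPA-structure on a Lie algebra $\mathfrak{g}$ is a bilinear product $x\cdot y$ on $\mathfrak{g}$ satisfying, for all $x,y,z$: $x\cdot y=y\cdot x$; $[x,y]\cdot z=x\cdot(y\cdot z)-y\cdot(x\cdot z)$; $x\cdot[y,z]=[x\cdot y,z]+[y,x\cdot z]$. It is called inner if $x\cdot y=[\phi(x),y]$ for some Lie algebra homomorphism $\phi:\mathfrak{g}\to\mathfrak{g}$, and nil-inner if it can be written in this form with $\phi$ a nilpotent Lie algebra homomorphism. A subspace $I$ is an ideal if it is both a Lie ideal ($[\mathfrak{g},I]\subseteq I$) and an algebra ideal ($\mathfrak{g}\cdot I\subseteq I$). *)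

theory Defs
  imports Complex_Main
begin

definition bilinear_map :: "(complex \<Rightarrow> 'a \<Rightarrow> 'a) \<Rightarrow> ('a::ab_group_add \<Rightarrow> 'a \<Rightarrow> 'a) \<Rightarrow> bool" where
  "bilinear_map sc m \<longleftrightarrow>
     (\<forall>x. Vector_Spaces.linear sc sc (m x)) \<and> (\<forall>y. Vector_Spaces.linear sc sc (\<lambda>x. m x y))"

definition lie_algebra :: "(complex \<Rightarrow> 'a \<Rightarrow> 'a) \<Rightarrow> ('a::ab_group_add \<Rightarrow> 'a \<Rightarrow> 'a) \<Rightarrow> bool" where
  "lie_algebra sc br \<longleftrightarrow> vector_space sc \<and> bilinear_map sc br \<and>
     (\<forall>x. br x x = 0) \<and>
     (\<forall>x y z. br x (br y z) + br y (br z x) + br z (br x y) = 0)"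

definition fin_dim_complex_lie_algebra ::
  "(complex \<Rightarrow> 'a \<Rightarrow> 'a) \<Rightarrow> ('a::ab_group_add \<Rightarrow> 'a \<Rightarrow> 'a) \<Rightarrow> bool" where
  "fin_dim_complex_lie_algebra sc br \<longleftrightarrow> lie_algebra sc br \<and>
     (\<exists>B. finite_dimensional_vector_space sc B)"

definition lie_endo :: "(complex \<Rightarrow> 'a \<Rightarrow> 'a) \<Rightarrow> ('a::ab_group_add \<Rightarrow> 'a \<Rightarrow> 'a) \<Rightarrow> ('a \<Rightarrow> 'a) \<Rightarrow> bool" where
  "lie_endo sc br f \<longleftrightarrow> Vector_Spaces.linear sc sc f \<and> (\<forall>x y. f (br x y) = br (f x) (f y))"

definition cpa_structure :: "(complex \<Rightarrow> 'a \<Rightarrow> 'a) \<Rightarrow> ('a::ab_group_add \<Rightarrow> 'a \<Rightarrow> 'a) \<Rightarrow> ('a \<Rightarrow> 'a \<Rightarrow> 'a) \<Rightarrow> bool" where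
  "cpa_structure sc br p \<longleftrightarrow> bilinear_map sc p \<and>
     (\<forall>x y. p x y = p y x) \<and>
     (\<forall>x y z. p (br x y) z = p x (p y z) - p y (p x z)) \<and>
     (\<forall>x y z. p x (br y z) = br (p x y) z + br y (p x z))"

definition inner_cpa_via :: "(complex \<Rightarrow> 'a \<Rightarrow> 'a) \<Rightarrow> ('a::ab_group_add \<Rightarrow> 'a \<Rightarrow> 'a) \<Rightarrow> ('a \<Rightarrow> 'a) \<Rightarrow> bool" where
  "inner_cpa_via sc br phi \<longleftrightarrow> lie_endo sc br phi \<and> cpa_structure sc br (\<lambda>x y. br (phi x) y)"

definition lie_endo_on :: "(complex \<Rightarrow> 'a \<Rightarrow> 'a) \<Rightarrow> ('a::ab_group_add \<Rightarrow> 'a \<Rightarrow> 'a) \<Rightarrow> 'a set \<Rightarrow> ('a \<Rightarrow> 'a) \<Rightarrow> bool" where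
  "lie_endo_on sc br S f \<longleftrightarrow> f ` S \<subseteq> S \<and>
     (\<forall>x\<in>S. \<forall>y\<in>S. f (x + y) = f x + f y) \<and>
     (\<forall>c. \<forall>x\<in>S. f (sc c x) = sc c (f x)) \<and>
     (\<forall>x\<in>S. \<forall>y\<in>S. f (br x y) = br (f x) (f y))"

definition nilpotent_on :: "'a set \<Rightarrow> ('a::zero \<Rightarrow> 'a) \<Rightarrow> bool" where
  "nilpotent_on S f \<longleftrightarrow> f ` S \<subseteq> S \<and> (\<exists>k. \<forall>x\<in>S. (f ^^ k) x = 0)"

definition nil_inner_on :: "(complex \<Rightarrow> 'a \<Rightarrow> 'a) \<Rightarrow> ('a::ab_group_add \<Rightarrow> 'a \<Rightarrow> 'a) \<Rightarrow> 'a set \<Rightarrow> ('a \<Rightarrow> 'a \<Rightarrow> 'a) \<Rightarrow> bool" where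
  "nil_inner_on sc br S p \<longleftrightarrow>
     (\<exists>psi. lie_endo_on sc br S psi \<and> nilpotent_on S psi \<and>
            (\<forall>x\<in>S. \<forall>y\<in>S. p x y = br (psi x) y))"

definition cpa_ideal :: "(complex \<Rightarrow> 'a \<Rightarrow> 'a) \<Rightarrow> ('a::ab_group_add \<Rightarrow> 'a \<Rightarrow> 'a) \<Rightarrow> ('a \<Rightarrow> 'a \<Rightarrow> 'a) \<Rightarrow> 'a set \<Rightarrow> bool" where
  "cpa_ideal sc br p I \<longleftrightarrow> module.subspace sc I \<and>
     (\<forall>x y. y \<in> I \<longrightarrow> br x y \<in> I) \<and> (\<forall>x y. y \<in> I \<longrightarrow> p x y \<in> I)"

definition bracket_space :: "(complex \<Rightarrow> 'a \<Rightarrow> 'a) \<Rightarrow> ('a::ab_group_add \<Rightarrow> 'a \<Rightarrow> 'a) \<Rightarrow> 'a set \<Rightarrow> 'a set \<Rightarrow> 'a set" where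
  "bracket_space sc br A B = module.span sc {br a b | a b. a \<in> A \<and> b \<in> B}"

definition direct_sum_decomp :: "'a::ab_group_add set \<Rightarrow> 'a set \<Rightarrow> bool" where
  "direct_sum_decomp N H \<longleftrightarrow> N \<inter> H = {0} \<and>
     (\<forall>z. \<exists>x\<in>N. \<exists>y\<in>H. z = x + y)"

end

theory Submission
  imports Defs
begin

text \<open>
  Commutativity of the CPA product says \<open>[phi x, y] = -[x, phi y]\<close>.  Hence for the Fitting
  decomposition \<open>g = N \<oplus> H\<close> of \<open>phi\<close> (\<open>N = ker phi\<^sup>K\<close>, \<open>H = im phi\<^sup>K\<close>) we get
  \<open>[N, H] = 0\<close>; as \<open>phi\<^sup>K\<close> is a Lie homomorphism, both parts are ideals, \<open>phi\<close> is nilpotent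
  on \<open>N\<close> and bijective on \<open>H\<close>.

  For \<open>H\<close>: applying \<open>phi\<close> to \<open>[[x,y],u]\<close> in two ways gives
  \<open>[[x,y], phi\<^sup>4 u] = [[x,y], phi\<^sup>2 u]\<close>, so the derived algebra centralises the image of
  \<open>phi\<^sup>2 - 1\<close> on \<open>H = phi\<^sup>2(H)\<close>.  Modulo this image, \<open>H\<close> is a sum of generalised
  eigenvectors of \<open>phi\<close> for the eigenvalues \<open>1\<close> and \<open>-1\<close>.  Generalised eigenspaces for
  \<open>s\<close> and \<open>t\<close> bracket into the one for \<open>s t\<close>, and the one for \<open>s \<noteq> 0\<close> is abelian
  because \<open>phi + s\<close> is invertible on it and adjoint to \<open>-(phi - s)\<close>.  So all brackets of
  \<open>[H, H]\<close> reduce to elements of the abelian generalised \<open>-1\<close>-eigenspace.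
\<close>

lemma funpow_commute_apply:
  assumes "\<And>x. f (g x) = g (f x)"
  shows "(f ^^ n) (g x) = g ((f ^^ n) x)"
  by (induction n) (simp_all add: assms)

lemma funpow_image_subset: "f ` S \<subseteq> S \<Longrightarrow> (f ^^ n) ` S \<subseteq> S"
  by (induction n) (auto simp: image_subset_iff)

lemma funpow_image_eq: "f ` S = S \<Longrightarrow> (f ^^ n) ` S = S"
proof (induction n)
  case (Suc n)
  have "(f ^^ Suc n) ` S = f ` (f ^^ n) ` S"
    by (simp add: image_image)
  with Suc show ?case by simp
qed simp

lemma funpow_eq_0_mono:
  fixes f :: "'a::zero \<Rightarrow> 'a"
  assumes "f 0 = 0" and "(f ^^ m) x = 0" and "m \<le> n"
  shows "(f ^^ n) x = 0"
proof -
  have "(f ^^ k) 0 = 0" for k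
    by (induction k) (simp_all add: assms(1))
  moreover have "(f ^^ n) x = (f ^^ (n - m)) ((f ^^ m) x)"
    using assms(3) by (metis funpow_add le_add_diff_inverse2 o_apply)
  ultimately show ?thesis
    using assms(2) by simp
qed

context finite_dimensional_vector_space
begin

interpretation vector_space_pair scale scale ..

lemma linear_funpow:
  assumes "Vector_Spaces.linear scale scale f"
  shows "Vector_Spaces.linear scale scale (f ^^ n)"
proof (induction n)
  case (Suc n)
  show ?case
    using Vector_Spaces.linear_compose[OF Suc.IH assms] by (simp add: comp_def)
qed (simp add: linear_ident)

lemma decreasing_subspaces_stabilize:
  assumes "\<And>n. subspace (A n)" and "\<And>n. A (Suc n) \<subseteq> A n"
  obtains k where "A (Suc k) = A k"
proof -
  obtain k where "\<forall>n. dim (A k) \<le> dim (A n)"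
    using ex_has_least_nat[of "\<lambda>_. True" 0 "\<lambda>n. dim (A n)"] by auto
  then show thesis
    using that subspace_dim_equal[OF assms(1) assms(1) assms(2)] by blast
qed

lemma inj_on_if_image_eq:
  assumes f: "Vector_Spaces.linear scale scale f" and T: "subspace T" and onto: "f ` T = T"
  shows "inj_on f T"
  unfolding linear_inj_on_iff_eq_0[OF f T]
proof (intro ballI impI, rule ccontr)
  fix x assume x: "x \<in> T" "f x = 0" "x \<noteq> 0"
  have "independent {x}"
    using x(3) by (simp add: independent_insert)
  then obtain B where B: "{x} \<subseteq> B" "B \<subseteq> T" "independent B" "T \<subseteq> span B"
    using x(1) maximal_independent_subset_extend[of "{x}" T] by blast
  have finB: "finite B"
    using B(3) by (rule finiteI_independent)
  have spanB: "span B = T"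
    using B(2,4) span_minimal[OF B(2) T] by blast
  have "f ` B \<subseteq> insert 0 (f ` (B - {x}))"
    using x(2) by blast
  then have "T \<subseteq> span (f ` (B - {x}))"
    using onto spanB linear_span_image[OF f, of B] span_mono span_insert_0 by metis
  then have "dim T \<le> card (f ` (B - {x}))"
    using finB by (intro dim_le_card) auto
  also have "\<dots> < card B"
    using B(1) finB card_image_le[of "B - {x}" f] card_Diff1_less[of B x] by simp
  also have "\<dots> = dim T"
    using B(3) spanB dim_eq_card_independent dim_span by metis
  finally show False by simp
qed

lemma image_eq_if_inj_on:
  assumes f: "Vector_Spaces.linear scale scale f" and T: "subspace T" and inv: "f ` T \<subseteq> T"
    and inj: "inj_on f T"
  shows "f ` T = T"
proof -
  interpret finite_dimensional_vector_space_pair_1 scale Basis scale ..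
  have "dim (f ` T) = dim T"
    using dim_image_eq[OF f, of T] inj T span_eq_iff by metis
  then show ?thesis
    using subspace_dim_equal[OF linear_subspace_image[OF f T] T inv] by simp
qed

lemma fitting_decomposition:
  assumes f: "Vector_Spaces.linear scale scale f" and S: "subspace S" and inv: "f ` S \<subseteq> S"
  obtains k where "\<And>s. s \<in> S \<Longrightarrow> \<exists>a b. s = a + b \<and> a \<in> S \<and> (f ^^ k) a = 0 \<and> b \<in> (f ^^ k) ` S"
    and "\<And>x. x \<in> (f ^^ k) ` S \<Longrightarrow> (f ^^ k) x = 0 \<Longrightarrow> x = 0"
    and "f ` (f ^^ k) ` S = (f ^^ k) ` S"
proof -
  define A where "A n = (f ^^ n) ` S" for n
  have sub: "subspace (A n)" for n
    unfolding A_def by (rule linear_subspace_image[OF linear_funpow[OF f] S])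
  have "A (Suc n) \<subseteq> A n" for n
    unfolding A_def funpow_Suc_right image_comp[symmetric] by (rule image_mono[OF inv])
  with sub obtain k where "A (Suc k) = A k"
    by (rule decreasing_subspaces_stabilize)
  then have stable: "f ` A k = A k"
    unfolding A_def by (simp add: image_comp)
  then have onto: "(f ^^ k) ` A k = A k"
    by (rule funpow_image_eq)
  have inj: "inj_on (f ^^ k) (A k)"
    by (rule inj_on_if_image_eq[OF linear_funpow[OF f] sub onto])
  have AS: "A k \<subseteq> S"
    unfolding A_def by (rule funpow_image_subset[OF inv])
  show thesis
  proof (rule that)
    fix s assume s: "s \<in> S"
    then have "(f ^^ k) s \<in> (f ^^ k) ` A k"
      using onto unfolding A_def by blast
    then obtain b where b: "b \<in> A k" "(f ^^ k) s = (f ^^ k) b"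
      by blast
    show "\<exists>a b. s = a + b \<and> a \<in> S \<and> (f ^^ k) a = 0 \<and> b \<in> (f ^^ k) ` S"
    proof (intro exI conjI)
      show "s - b \<in> S"
        using s b(1) AS subspace_diff[OF S] by blast
      show "(f ^^ k) (s - b) = 0"
        using b(2) linear_diff[OF linear_funpow[OF f]] by simp
    qed (use b(1) A_def in auto)
  next
    fix x assume "x \<in> (f ^^ k) ` S" "(f ^^ k) x = 0"
    then show "x = 0"
      using inj subspace_0[OF sub] linear_0[OF linear_funpow[OF f]]
      unfolding A_def inj_on_def by metis
  qed (use stable A_def in simp)
qed

end

locale complex_lie_algebra = vector_space sc
  for sc :: "complex \<Rightarrow> 'a::ab_group_add \<Rightarrow> 'a" +
  fixes br :: "'a \<Rightarrow> 'a \<Rightarrow> 'a"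
  assumes linear_br_right: "Vector_Spaces.linear sc sc (br x)"
    and linear_br_left: "Vector_Spaces.linear sc sc (\<lambda>x. br x y)"
    and br_self: "br x x = 0"
    and jacobi: "br x (br y z) + br y (br z x) + br z (br x y) = 0"
begin

interpretation vector_space_pair sc sc ..

lemma br_right_distrib:
  "br z (x + y) = br z x + br z y" "br z (sc c x) = sc c (br z x)" "br z 0 = 0"
  "br z (- x) = - br z x" "br z (x - y) = br z x - br z y"
  using linear_add linear_scale linear_0 linear_neg linear_diff
  by (simp_all add: linear_br_right)

lemma br_left_distrib:
  "br (x + y) z = br x z + br y z" "br (sc c x) z = sc c (br x z)" "br 0 z = 0"
  "br (- x) z = - br x z" "br (x - y) z = br x z - br y z"
  using linear_add[OF linear_br_left] linear_scale[OF linear_br_left] linear_0[OF linear_br_left]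
    linear_neg[OF linear_br_left] linear_diff[OF linear_br_left]
  by simp_all

lemma br_anticomm: "br x y = - br y x"
proof -
  have "br (x + y) (x + y) = (br x x + br x y) + (br y x + br y y)"
    by (simp only: br_left_distrib(1) br_right_distrib(1) ac_simps)
  then have "br x y + br y x = 0"
    by (simp add: br_self)
  then show ?thesis
    by (simp add: eq_neg_iff_add_eq_0)
qed

lemma br_leibniz: "br x (br y z) = br (br x y) z + br y (br x z)"
proof -
  have "br y (br z x) = - br y (br x z)"
    by (subst br_anticomm) (rule br_right_distrib(4))
  moreover have "br z (br x y) = - br (br x y) z"
    by (rule br_anticomm)
  ultimately have "br x (br y z) - br y (br x z) - br (br x y) z = 0"
    using jacobi[of x y z] by (simp only: diff_conv_add_uminus)
  then show ?thesis
    by (simp only: diff_diff_eq right_minus_eq add.commute)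
qed

lemma br_funpow_eq_0:
  assumes adjoint: "\<And>x y. br (f x) y = - br x (g y)" and "(f ^^ n) x = 0"
  shows "br x ((g ^^ n) y) = 0"
  using assms(2)
proof (induction n arbitrary: x)
  case 0
  then show ?case by (simp add: br_left_distrib(3))
next
  case (Suc n)
  have "(f ^^ n) (f x) = 0"
    using Suc.prems by (simp add: funpow_swap1)
  then have "br (f x) ((g ^^ n) y) = 0"
    by (rule Suc.IH)
  then show ?case
    by (simp add: adjoint)
qed

end

locale inner_cpa = complex_lie_algebra sc br + finite_dimensional_vector_space sc Basis
  for sc :: "complex \<Rightarrow> 'a::ab_group_add \<Rightarrow> 'a" and br Basis +
  fixes phi :: "'a \<Rightarrow> 'a"
  assumes linear_phi: "Vector_Spaces.linear sc sc phi"
    and phi_br: "phi (br x y) = br (phi x) (phi y)"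
    and cpa_commute: "br (phi x) y = br (phi y) x"
begin

interpretation vector_space_pair sc sc ..

lemma phi_distrib:
  "phi (x + y) = phi x + phi y" "phi (sc c x) = sc c (phi x)" "phi 0 = 0"
  "phi (- x) = - phi x" "phi (x - y) = phi x - phi y"
  using linear_add linear_scale linear_0 linear_neg linear_diff
  by (simp_all add: linear_phi)

lemma br_phi_left: "br (phi x) y = - br x (phi y)"
  by (subst cpa_commute) (rule br_anticomm)

lemma funpow_phi_br: "(phi ^^ n) (br x y) = br ((phi ^^ n) x) ((phi ^^ n) y)"
  by (induction n) (simp_all add: phi_br)

lemma phi_br_eq: "phi (br x y) = - br x (phi (phi y))"
  by (simp only: phi_br br_phi_left)

lemma br_bracket_phi4: "br (br x y) (phi (phi (phi (phi u)))) = br (br x y) (phi (phi u))"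
proof -
  define v where "v = phi (phi (phi (phi u)))"
  have leibniz: "br (br x y) w = br x (br y w) - br y (br x w)" for w
    by (simp add: br_leibniz[of x y w])
  have phi2: "phi (phi (br a u)) = br a v" for a
    unfolding v_def by (simp only: phi_br_eq phi_distrib(4) minus_minus)
  have "- br (br x y) (phi (phi u)) = phi (br (br x y) u)"
    by (simp only: phi_br_eq)
  also have "\<dots> = - br x (phi (phi (br y u))) + br y (phi (phi (br x u)))"
    by (simp add: leibniz phi_distrib(5) phi_br_eq)
  also have "\<dots> = - br (br x y) v"
    by (simp add: phi2 leibniz)
  finally show ?thesis
    unfolding v_def by simp
qed

lemma br_bracket_space_phi4:
  assumes "X \<in> bracket_space sc br A B"
  shows "br X (phi (phi (phi (phi u)))) = br X (phi (phi u))"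
proof -
  have "br X (phi (phi (phi (phi u))) - phi (phi u)) = 0"
    using assms unfolding bracket_space_def
    by (rule linear_eq_0_on_span[OF linear_br_left, rotated])
      (auto simp: br_right_distrib(5) br_bracket_phi4)
  then show ?thesis
    by (simp add: br_right_distrib(5))
qed

definition phi_minus :: "complex \<Rightarrow> 'a \<Rightarrow> 'a"
  where "phi_minus s x = phi x - sc s x"

definition gen_eigenspace :: "complex \<Rightarrow> 'a set"
  where "gen_eigenspace s = {x. \<exists>m. (phi_minus s ^^ m) x = 0}"

lemma linear_phi_minus: "Vector_Spaces.linear sc sc (phi_minus s)"
  unfolding phi_minus_def by (rule linear_compose_sub[OF linear_phi linear_scale_self])

lemma linear_funpow_phi_minus: "Vector_Spaces.linear sc sc (phi_minus s ^^ n)"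
  by (rule linear_funpow[OF linear_phi_minus])

lemma phi_minus_0: "phi_minus s 0 = 0"
  by (rule linear_0[OF linear_phi_minus])

lemma phi_minus_commute: "phi_minus s (phi_minus t x) = phi_minus t (phi_minus s x)"
proof -
  have "phi_minus s (phi_minus t x) = phi (phi x) - (sc t (phi x) + sc s (phi x)) + sc (s * t) x" for s t
    unfolding phi_minus_def
    by (simp add: phi_distrib(2,5) scale_right_diff_distrib scale_scale diff_diff_eq2 diff_diff_eq)
  then show ?thesis
    by (simp add: add.commute mult.commute)
qed

lemma br_phi_minus_left: "br (phi_minus s x) y = - br x (phi_minus (- s) y)"
  unfolding phi_minus_def
  by (simp add: br_left_distrib br_right_distrib br_phi_left)

lemma phi_minus_br:
  "phi_minus (s * t) (br u v) =
     br (phi_minus s u) (phi_minus t v) + sc t (br (phi_minus s u) v) + sc s (br u (phi_minus t v))"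
proof -
  have "phi u = phi_minus s u + sc s u" "phi v = phi_minus t v + sc t v"
    by (simp_all add: phi_minus_def)
  then have "phi_minus (s * t) (br u v) =
      br (phi_minus s u + sc s u) (phi_minus t v + sc t v) - sc (s * t) (br u v)"
    by (simp add: phi_minus_def phi_br)
  then show ?thesis
    by (simp add: br_left_distrib(1,2) br_right_distrib(1,2) scale_right_distrib ac_simps)
qed

lemma funpow_phi_minus_br_eq_0:
  assumes "(phi_minus s ^^ a) u = 0" and "(phi_minus t ^^ b) v = 0"
  shows "(phi_minus (s * t) ^^ (a + b)) (br u v) = 0"
  using assms
proof (induction "a + b" arbitrary: a b u v rule: less_induct)
  case less
  show ?case
  proof (cases "a = 0 \<or> b = 0")
    case True
    then have "br u v = 0"
      using less.prems br_left_distrib(3) br_right_distrib(3) by auto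
    then show ?thesis
      using linear_0[OF linear_funpow_phi_minus] by simp
  next
    case False
    then obtain a' b' where ab: "a = Suc a'" "b = Suc b'"
      by (metis not0_implies_Suc)
    let ?D = "phi_minus (s * t) ^^ (a' + b)"
    have u': "(phi_minus s ^^ a') (phi_minus s u) = 0" and v': "(phi_minus t ^^ b') (phi_minus t v) = 0"
      using less.prems ab by (simp_all add: funpow_swap1)
    have "(phi_minus (s * t) ^^ (a' + b')) (br (phi_minus s u) (phi_minus t v)) = 0"
      using less.hyps[OF _ u' v'] ab by simp
    then have 1: "?D (br (phi_minus s u) (phi_minus t v)) = 0"
      using funpow_eq_0_mono[of "phi_minus (s * t)" "a' + b'" _ "a' + b"] phi_minus_0 ab by simp
    have 2: "?D (br (phi_minus s u) v) = 0"
      using less.hyps[OF _ u' less.prems(2)] ab by simp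
    have 3: "?D (br u (phi_minus t v)) = 0"
      using less.hyps[OF _ less.prems(1) v'] ab by simp
    have "(phi_minus (s * t) ^^ (a + b)) (br u v) = ?D (phi_minus (s * t) (br u v))"
      using ab by (simp add: funpow_swap1)
    also have "\<dots> = 0"
      using 1 2 3 linear_add[OF linear_funpow_phi_minus] linear_scale[OF linear_funpow_phi_minus]
      by (simp add: phi_minus_br)
    finally show ?thesis .
  qed
qed

lemma br_gen_eigenspace:
  assumes "u \<in> gen_eigenspace s" and "v \<in> gen_eigenspace t"
  shows "br u v \<in> gen_eigenspace (s * t)"
proof -
  obtain a b where "(phi_minus s ^^ a) u = 0" "(phi_minus t ^^ b) v = 0"
    using assms unfolding gen_eigenspace_def by blast
  then have "(phi_minus (s * t) ^^ (a + b)) (br u v) = 0"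
    by (rule funpow_phi_minus_br_eq_0)
  then show ?thesis
    unfolding gen_eigenspace_def by blast
qed

lemma subspace_gen_eigenspace: "subspace (gen_eigenspace s)"
proof (rule subspaceI)
  have "(phi_minus s ^^ 0) 0 = 0"
    by simp
  then show "0 \<in> gen_eigenspace s"
    unfolding gen_eigenspace_def by blast
next
  fix x y assume "x \<in> gen_eigenspace s" "y \<in> gen_eigenspace s"
  then obtain m n where "(phi_minus s ^^ m) x = 0" "(phi_minus s ^^ n) y = 0"
    unfolding gen_eigenspace_def by blast
  then have "(phi_minus s ^^ (m + n)) x = 0" "(phi_minus s ^^ (m + n)) y = 0"
    using funpow_eq_0_mono[of "phi_minus s" m x "m + n"] funpow_eq_0_mono[of "phi_minus s" n y "m + n"]
      phi_minus_0 by simp_all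
  then have "(phi_minus s ^^ (m + n)) (x + y) = 0"
    by (simp add: linear_add[OF linear_funpow_phi_minus])
  then show "x + y \<in> gen_eigenspace s"
    unfolding gen_eigenspace_def by blast
next
  fix c x assume "x \<in> gen_eigenspace s"
  then obtain m where "(phi_minus s ^^ m) x = 0"
    unfolding gen_eigenspace_def by blast
  then have "(phi_minus s ^^ m) (sc c x) = 0"
    by (simp add: linear_scale[OF linear_funpow_phi_minus])
  then show "sc c x \<in> gen_eigenspace s"
    unfolding gen_eigenspace_def by blast
qed

lemma phi_minus_gen_eigenspace: "phi_minus t ` gen_eigenspace s \<subseteq> gen_eigenspace s"
proof
  fix y assume "y \<in> phi_minus t ` gen_eigenspace s"
  then obtain x m where "y = phi_minus t x" "(phi_minus s ^^ m) x = 0"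
    unfolding gen_eigenspace_def by blast
  then have "(phi_minus s ^^ m) y = 0"
    using funpow_commute_apply[of "phi_minus s" "phi_minus t", OF phi_minus_commute] phi_minus_0
    by simp
  then show "y \<in> gen_eigenspace s"
    unfolding gen_eigenspace_def by blast
qed

lemma funpow_phi_minus_eigenvector:
  assumes "phi x = sc s x"
  shows "(phi_minus t ^^ n) x = sc ((s - t) ^ n) x"
proof (induction n)
  case (Suc n)
  have "phi_minus t x = sc (s - t) x"
    unfolding phi_minus_def assms by (simp add: scale_left_diff_distrib)
  with Suc show ?case
    by (simp add: linear_scale[OF linear_phi_minus] mult.commute)
qed simp

lemma gen_eigenspace_disjoint:
  assumes "s \<noteq> t" and "x \<in> gen_eigenspace s" and "x \<in> gen_eigenspace t"
  shows "x = 0"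
proof -
  obtain a b where "(phi_minus s ^^ a) x = 0" and tx: "(phi_minus t ^^ b) x = 0"
    using assms(2,3) unfolding gen_eigenspace_def by blast
  then show ?thesis
  proof (induction a arbitrary: x)
    case (Suc a)
    have "(phi_minus t ^^ b) (phi_minus s x) = 0"
      using funpow_commute_apply[of "phi_minus t" "phi_minus s", OF phi_minus_commute] Suc.prems(2)
        phi_minus_0 by simp
    with Suc have "phi_minus s x = 0"
      by (simp add: funpow_swap1)
    then have "phi x = sc s x"
      unfolding phi_minus_def by simp
    then have "sc ((s - t) ^ b) x = (phi_minus t ^^ b) x"
      by (rule funpow_phi_minus_eigenvector[symmetric])
    then show ?case
      using Suc.prems(2) assms(1) by simp
  qed simp
qed

lemma br_gen_eigenspace_eq_0:
  assumes "s \<noteq> 0" and x: "x \<in> gen_eigenspace s" and y: "y \<in> gen_eigenspace s"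
  shows "br x y = 0"
proof -
  let ?S = "gen_eigenspace s" and ?f = "phi_minus (- s)"
  obtain m where m: "(phi_minus s ^^ m) x = 0"
    using x unfolding gen_eigenspace_def by blast
  have "inj_on ?f ?S"
    unfolding linear_inj_on_iff_eq_0[OF linear_phi_minus subspace_gen_eigenspace]
  proof (intro ballI impI)
    fix z assume "z \<in> ?S" "?f z = 0"
    moreover have "(?f ^^ 1) z = 0"
      using \<open>?f z = 0\<close> by simp
    then have "z \<in> gen_eigenspace (- s)"
      unfolding gen_eigenspace_def by blast
    ultimately show "z = 0"
      using gen_eigenspace_disjoint[of s "- s" z] \<open>s \<noteq> 0\<close> by simp
  qed
  then have "?f ` ?S = ?S"
    by (rule image_eq_if_inj_on[OF linear_phi_minus subspace_gen_eigenspace phi_minus_gen_eigenspace])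
  then have "(?f ^^ m) ` ?S = ?S"
    by (rule funpow_image_eq)
  then obtain w where "y = (?f ^^ m) w"
    using y by (metis imageE)
  then show ?thesis
    by (simp only: br_funpow_eq_0[OF br_phi_minus_left m])
qed

lemma br_gen_eigenspace_pm1:
  assumes "a1 \<in> gen_eigenspace 1" "c1 \<in> gen_eigenspace (- 1)"
    and "a2 \<in> gen_eigenspace 1" "c2 \<in> gen_eigenspace (- 1)"
  shows "br (a1 + c1) (a2 + c2) \<in> gen_eigenspace (- 1)"
proof -
  have "br a1 a2 = 0" "br c1 c2 = 0"
    using br_gen_eigenspace_eq_0[of 1 a1 a2] br_gen_eigenspace_eq_0[of "- 1" c1 c2] assms by simp_all
  moreover have "br a1 c2 \<in> gen_eigenspace (- 1)" "br c1 a2 \<in> gen_eigenspace (- 1)"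
    using br_gen_eigenspace[of a1 1 c2 "- 1"] br_gen_eigenspace[of c1 "- 1" a2 1] assms by simp_all
  ultimately show ?thesis
    using subspace_add[OF subspace_gen_eigenspace]
    by (simp add: br_left_distrib(1) br_right_distrib(1))
qed

lemma phi_minus_image_subset: "subspace H \<Longrightarrow> phi ` H \<subseteq> H \<Longrightarrow> phi_minus s ` H \<subseteq> H"
  unfolding phi_minus_def using subspace_diff subspace_scale by blast

lemma phi_minus_pm1: "phi_minus (- 1) (phi_minus 1 x) = phi (phi x) - x"
  unfolding phi_minus_def by (simp add: phi_distrib scale_minus_left)

text \<open>Decomposing \<open>H\<close> first along \<open>phi - 1\<close> and then along \<open>phi + 1\<close> leaves a remainder in
  the image of \<open>(phi + 1)(phi - 1) = phi\<^sup>2 - 1\<close>.\<close>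

lemma gen_eigenspace_pm1_decomposition:
  assumes H: "subspace H" and onto: "phi ` H = H" and h: "h \<in> H"
  obtains a c w where "h = a + c + (phi (phi (phi (phi w))) - phi (phi w))"
    and "a \<in> gen_eigenspace 1" and "c \<in> gen_eigenspace (- 1)"
proof -
  let ?f = "phi_minus 1" and ?g = "phi_minus (- 1)"
  have fH: "?f ` H \<subseteq> H" and gH: "?g ` H \<subseteq> H"
    using phi_minus_image_subset[OF H] onto by simp_all
  obtain k where dec1: "\<And>h. h \<in> H \<Longrightarrow> \<exists>a b. h = a + b \<and> a \<in> H \<and> (?f ^^ k) a = 0 \<and> b \<in> (?f ^^ k) ` H"
    and "\<And>x. x \<in> (?f ^^ k) ` H \<Longrightarrow> (?f ^^ k) x = 0 \<Longrightarrow> x = 0"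
    and stable1: "?f ` (?f ^^ k) ` H = (?f ^^ k) ` H"
    by (erule fitting_decomposition[OF linear_phi_minus H fH])
  define H1 where "H1 = (?f ^^ k) ` H"
  have H1: "subspace H1"
    unfolding H1_def by (rule linear_subspace_image[OF linear_funpow_phi_minus H])
  have H1H: "H1 \<subseteq> H"
    unfolding H1_def by (rule funpow_image_subset[OF fH])
  have gH1: "?g ` H1 \<subseteq> H1"
  proof
    fix y assume "y \<in> ?g ` H1"
    then obtain t where t: "t \<in> H" "y = ?g ((?f ^^ k) t)"
      unfolding H1_def by blast
    have "?g ((?f ^^ k) t) = (?f ^^ k) (?g t)"
      by (rule funpow_commute_apply[of ?f ?g, OF phi_minus_commute, symmetric])
    moreover have "?g t \<in> H"
      using gH t(1) by blast
    ultimately show "y \<in> H1"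
      unfolding H1_def t(2) by blast
  qed
  obtain l where dec2: "\<And>b. b \<in> H1 \<Longrightarrow> \<exists>c d. b = c + d \<and> c \<in> H1 \<and> (?g ^^ l) c = 0 \<and> d \<in> (?g ^^ l) ` H1"
    and "\<And>x. x \<in> (?g ^^ l) ` H1 \<Longrightarrow> (?g ^^ l) x = 0 \<Longrightarrow> x = 0"
    and stable2: "?g ` (?g ^^ l) ` H1 = (?g ^^ l) ` H1"
    by (erule fitting_decomposition[OF linear_phi_minus H1 gH1])
  obtain a b where ab: "h = a + b" "(?f ^^ k) a = 0" "b \<in> H1"
    using dec1[OF h] unfolding H1_def by blast
  obtain c d where cd: "b = c + d" "(?g ^^ l) c = 0" "d \<in> (?g ^^ l) ` H1"
    using dec2[OF ab(3)] by blast
  obtain d1 where d1: "d = ?g d1" "d1 \<in> (?g ^^ l) ` H1"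
    using cd(3) stable2 by (metis imageE)
  then have "d1 \<in> H1"
    using funpow_image_subset[OF gH1] by blast
  then obtain d2 where d2: "d1 = ?f d2" "d2 \<in> H1"
    using stable1 unfolding H1_def by (metis imageE)
  then obtain w' where w': "d2 = phi w'" "w' \<in> H"
    using H1H onto by blast
  obtain w where "w' = phi w"
    using w'(2) onto by blast
  then have "d = phi (phi (phi (phi w))) - phi (phi w)"
    using d1(1) d2(1) w'(1) phi_minus_pm1 by simp
  moreover have "a \<in> gen_eigenspace 1" "c \<in> gen_eigenspace (- 1)"
    unfolding gen_eigenspace_def using ab(2) cd(2) by blast+
  ultimately show thesis
    using that ab(1) cd(1) by (simp add: add.assoc)
qed

lemma br_bracket_space_br_phi_defect:
  assumes "X \<in> bracket_space sc br A B"
  shows "br X (br u (phi (phi (phi (phi w))) - phi (phi w))) = 0"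
proof -
  have "br X (phi (phi (phi (phi w))) - phi (phi w)) = 0"
    using br_bracket_space_phi4[OF assms] by (simp add: br_right_distrib(5))
  moreover have "br (br X u) (phi (phi (phi (phi w))) - phi (phi w)) = 0"
    using br_bracket_phi4 by (simp add: br_right_distrib(5))
  ultimately show ?thesis
    by (simp add: br_leibniz br_right_distrib(3))
qed

lemma br_bracket_space_reduce:
  assumes H: "subspace H" and onto: "phi ` H = H" and Z: "Z \<in> bracket_space sc br A B"
    and h1: "h1 \<in> H" and h2: "h2 \<in> H"
  obtains e where "e \<in> gen_eigenspace (- 1)" and "e \<in> bracket_space sc br UNIV UNIV"
    and "br Z (br h1 h2) = br Z e"
proof -
  obtain a1 c1 w1 where 1: "h1 = a1 + c1 + (phi (phi (phi (phi w1))) - phi (phi w1))"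
    "a1 \<in> gen_eigenspace 1" "c1 \<in> gen_eigenspace (- 1)"
    by (erule gen_eigenspace_pm1_decomposition[OF H onto h1])
  obtain a2 c2 w2 where 2: "h2 = a2 + c2 + (phi (phi (phi (phi w2))) - phi (phi w2))"
    "a2 \<in> gen_eigenspace 1" "c2 \<in> gen_eigenspace (- 1)"
    by (erule gen_eigenspace_pm1_decomposition[OF H onto h2])
  define e1 e2 where "e1 = a1 + c1" and "e2 = a2 + c2"
  define d1 d2 where "d1 = phi (phi (phi (phi w1))) - phi (phi w1)"
    and "d2 = phi (phi (phi (phi w2))) - phi (phi w2)"
  have "br Z (br u d1) = 0" "br Z (br u d2) = 0" for u
    unfolding d1_def d2_def by (rule br_bracket_space_br_phi_defect[OF Z])+
  moreover have "br d1 e2 = - br e2 d1"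
    by (rule br_anticomm)
  moreover have "br Z (br h1 h2) = br Z (br e1 e2) + br Z (br e1 d2) + (br Z (br d1 e2) + br Z (br d1 d2))"
    unfolding 1(1) 2(1) e1_def[symmetric] e2_def[symmetric] d1_def[symmetric] d2_def[symmetric]
    by (simp only: br_left_distrib(1) br_right_distrib(1) ac_simps)
  ultimately have "br Z (br h1 h2) = br Z (br e1 e2)"
    by (simp add: br_right_distrib(4))
  moreover have "br e1 e2 \<in> bracket_space sc br UNIV UNIV"
    unfolding bracket_space_def by (rule span_base) blast
  moreover have "br e1 e2 \<in> gen_eigenspace (- 1)"
    unfolding e1_def e2_def by (rule br_gen_eigenspace_pm1[OF 1(2,3) 2(2,3)])
  ultimately show thesis
    using that by blast
qed

lemma br_second_derived_eq_0:
  assumes H: "subspace H" and onto: "phi ` H = H"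
    and X: "X \<in> bracket_space sc br H H" and Y: "Y \<in> bracket_space sc br H H"
  shows "br X Y = 0"
proof -
  have "br X z = 0" if hz: "z \<in> {br h3 h4 |h3 h4. h3 \<in> H \<and> h4 \<in> H}" for z
  proof -
    obtain h3 h4 where z: "z = br h3 h4" and h34: "h3 \<in> H" "h4 \<in> H"
      using hz by blast
    obtain e where e: "e \<in> gen_eigenspace (- 1)" "e \<in> bracket_space sc br UNIV UNIV"
      "br X (br h3 h4) = br X e"
      by (erule br_bracket_space_reduce[OF H onto X h34])
    have "br e y = 0" if hy: "y \<in> {br h1 h2 |h1 h2. h1 \<in> H \<and> h2 \<in> H}" for y
    proof -
      obtain h1 h2 where y: "y = br h1 h2" and h12: "h1 \<in> H" "h2 \<in> H"
        using hy by blast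
      obtain e' where e': "e' \<in> gen_eigenspace (- 1)" "e' \<in> bracket_space sc br UNIV UNIV"
        "br e (br h1 h2) = br e e'"
        by (erule br_bracket_space_reduce[OF H onto e(2) h12])
      have "br e e' = 0"
        by (rule br_gen_eigenspace_eq_0[OF neg_one_neq_zero e(1) e'(1)])
      then show ?thesis
        using e'(3) y by simp
    qed
    then have "br e X = 0"
      using X unfolding bracket_space_def by (rule linear_eq_0_on_span[OF linear_br_right])
    then show ?thesis
      using e(3) z br_anticomm[of X e] by simp
  qed
  then show ?thesis
    using Y unfolding bracket_space_def by (rule linear_eq_0_on_span[OF linear_br_right])
qed

lemma cpa_ideal_if_lie_ideal:
  assumes "subspace I" and "\<And>x y. y \<in> I \<Longrightarrow> br x y \<in> I"
  shows "cpa_ideal sc br (\<lambda>x y. br (phi x) y) I"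
  unfolding cpa_ideal_def using assms by blast

lemma inner_cpa_decomposition:
  "\<exists>N H. direct_sum_decomp N H \<and>
     cpa_ideal sc br (\<lambda>x y. br (phi x) y) N \<and>
     cpa_ideal sc br (\<lambda>x y. br (phi x) y) H \<and>
     phi ` N \<subseteq> N \<and> phi ` H \<subseteq> H \<and>
     nilpotent_on N phi \<and>
     nil_inner_on sc br N (\<lambda>x y. br (phi x) y) \<and>
     bij_betw phi H H \<and>
     (\<forall>a\<in>bracket_space sc br H H. \<forall>b\<in>bracket_space sc br H H. br a b = 0)"
proof -
  obtain K where dec: "\<And>z. z \<in> UNIV \<Longrightarrow> \<exists>a b. z = a + b \<and> a \<in> UNIV \<and> (phi ^^ K) a = 0 \<and> b \<in> range (phi ^^ K)"
    and trivial: "\<And>x. x \<in> range (phi ^^ K) \<Longrightarrow> (phi ^^ K) x = 0 \<Longrightarrow> x = 0"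
    and stable: "phi ` range (phi ^^ K) = range (phi ^^ K)"
    by (erule fitting_decomposition[OF linear_phi subspace_UNIV subset_UNIV])
  define N where "N = {x. (phi ^^ K) x = 0}"
  define H where "H = range (phi ^^ K)"
  have N: "subspace N"
    unfolding N_def by (rule linear_subspace_kernel[OF linear_funpow[OF linear_phi]])
  have H: "subspace H"
    unfolding H_def by (rule linear_subspace_image[OF linear_funpow[OF linear_phi] subspace_UNIV])
  have phiN: "phi ` N \<subseteq> N"
    unfolding N_def by (auto simp: funpow_swap1[symmetric] phi_distrib(3))
  have phiH: "phi ` H = H"
    unfolding H_def by (rule stable)
  have N_ideal: "br x y \<in> N" if "y \<in> N" for x y
    using that unfolding N_def by (simp add: funpow_phi_br br_right_distrib(3))
  have H_ideal: "br x y \<in> H" if y: "y \<in> H" for x y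
  proof -
    obtain u where u: "y = (phi ^^ K) u"
      using y unfolding H_def by blast
    obtain a b where ab: "x = a + b" "(phi ^^ K) a = 0" "b \<in> range (phi ^^ K)"
      using dec by blast
    then obtain t where t: "b = (phi ^^ K) t"
      by blast
    have "br a y = 0"
      unfolding u by (rule br_funpow_eq_0[OF br_phi_left ab(2)])
    then have "br x y = (phi ^^ K) (br t u)"
      unfolding ab(1) t u by (simp add: br_left_distrib(1) funpow_phi_br)
    then show ?thesis
      unfolding H_def by blast
  qed
  have nilpotent: "nilpotent_on N phi"
    unfolding nilpotent_on_def using phiN unfolding N_def by blast
  show ?thesis
  proof (intro exI conjI)
    show "direct_sum_decomp N H"
      unfolding direct_sum_decomp_def
    proof
      show "N \<inter> H = {0}"
        using trivial subspace_0[OF N] subspace_0[OF H] unfolding N_def H_def by blast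
      show "\<forall>z. \<exists>x\<in>N. \<exists>y\<in>H. z = x + y"
        using dec unfolding N_def H_def by blast
    qed
    show "cpa_ideal sc br (\<lambda>x y. br (phi x) y) N"
      using N N_ideal by (rule cpa_ideal_if_lie_ideal)
    show "cpa_ideal sc br (\<lambda>x y. br (phi x) y) H"
      using H H_ideal by (rule cpa_ideal_if_lie_ideal)
    show "phi ` N \<subseteq> N" "phi ` H \<subseteq> H" "nilpotent_on N phi"
      using phiN phiH nilpotent by simp_all
    show "nil_inner_on sc br N (\<lambda>x y. br (phi x) y)"
      unfolding nil_inner_on_def lie_endo_on_def
      using phiN nilpotent phi_distrib(1,2) phi_br by blast
    show "bij_betw phi H H"
      unfolding bij_betw_def using inj_on_if_image_eq[OF linear_phi H phiH] phiH by blast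
    show "\<forall>a\<in>bracket_space sc br H H. \<forall>b\<in>bracket_space sc br H H. br a b = 0"
      using br_second_derived_eq_0[OF H phiH] by blast
  qed
qed

end

theorem theorem2p14:
  fixes sc :: "complex \<Rightarrow> 'a::ab_group_add \<Rightarrow> 'a"
    and br :: "'a \<Rightarrow> 'a \<Rightarrow> 'a"
    and phi :: "'a \<Rightarrow> 'a"
  assumes "fin_dim_complex_lie_algebra sc br"
    and "inner_cpa_via sc br phi"
  shows "\<exists>N H. direct_sum_decomp N H \<and>
           cpa_ideal sc br (\<lambda>x y. br (phi x) y) N \<and>
           cpa_ideal sc br (\<lambda>x y. br (phi x) y) H \<and>
           phi ` N \<subseteq> N \<and> phi ` H \<subseteq> H \<and>
           nilpotent_on N phi \<and>
           nil_inner_on sc br N (\<lambda>x y. br (phi x) y) \<and>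
           bij_betw phi H H \<and>
           (\<forall>a\<in>bracket_space sc br H H. \<forall>b\<in>bracket_space sc br H H. br a b = 0)"
proof -
  obtain B where "finite_dimensional_vector_space sc B"
    using assms(1) unfolding fin_dim_complex_lie_algebra_def by blast
  moreover have "complex_lie_algebra sc br"
    using assms(1)
    unfolding fin_dim_complex_lie_algebra_def lie_algebra_def bilinear_map_def complex_lie_algebra_def
      complex_lie_algebra_axioms_def by blast
  moreover have "inner_cpa_axioms sc br phi"
    using assms(2) unfolding inner_cpa_via_def lie_endo_def cpa_structure_def inner_cpa_axioms_def
    by blast
  ultimately interpret inner_cpa sc br B phi
    by (intro inner_cpa.intro)
  show ?thesis
    by (rule inner_cpa_decomposition)
qed

end
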